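(* Let $X$ be a Banach space, let $\varphi: X\to(-\infty,\infty]$ be a proper lower semicontinuous function, let $\bar{x}\in\operatorname{dom}\varphi$, and let $\bar{x}^*\in X^*$. The following are equivalent: (i) $\varphi$ is prox-bounded and $\bar{x}^*$ is a proximal subgradient of $\varphi$ at $\bar{x}$; (ii) $P_\lambda^{\bar{x}^*}\varphi(\bar{x}) = \{\bar{x}\}$ for some $\lambda>0$; (iii) $P_\lambda^{\bar{x}^*}\varphi(\bar{x}) = \{\bar{x}\}$ for all $\lambda>0$ sufficiently small.
   Context: $\varphi$ is prox-bounded if there exist $\alpha,\beta\in\mathbb{R}$ and $x_0\in X$ with $\varphi(x)\ge \alpha\|x-x_0\|^2+\beta$ for all $x\in X$. $\bar{x}^*\in X^*$ is a proximal subgradient of $\varphi$ at $\bar{x}\in\operatorname{dom}\varphi$ if there exist $r>0$ and $\varepsilon>0$ such that $\varphi(x)\ge\varphi(\bar{x})+\langle\bar{x}^*,x-\bar{x}\rangle-\frac{r}{2}\|x-\bar{x}\|^2$ for all $x$ in the open ball of radius $\varepsilon$ centered at $\bar{x}$. For $x^*\in X^*$ and $\lambda>0$, the $x^*$-proximal mapping is $P_\lambda^{x^*}\varphi(x) := \operatorname{argmin}_{w\in X}\{\varphi(w)-\langle x^*,w\rangle+\frac{1}{2\lambda}\|w-x\|^2\}$, $x\in X$. *)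

theory Defs
  imports "HOL-Analysis.Analysis"
begin

definition proper_fun :: "('a \<Rightarrow> ereal) \<Rightarrow> bool" where
  "proper_fun \<phi> \<longleftrightarrow> (\<forall>x. \<phi> x \<noteq> -\<infinity>) \<and> (\<exists>x. \<phi> x \<noteq> \<infinity>)"

definition lsc_fun :: "('a::topological_space \<Rightarrow> ereal) \<Rightarrow> bool" where
  "lsc_fun \<phi> \<longleftrightarrow> (\<forall>x. \<phi> x \<le> Liminf (at x) \<phi>)"

definition prox_bounded :: "('a::real_normed_vector \<Rightarrow> ereal) \<Rightarrow> bool" where
  "prox_bounded \<phi> \<longleftrightarrow>
     (\<exists>\<alpha> \<beta> :: real. \<exists>x0. \<forall>x. \<phi> x \<ge> ereal (\<alpha> * (norm (x - x0))\<^sup>2 + \<beta>))"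

definition proximal_subgradient ::
  "('a::real_normed_vector \<Rightarrow> ereal) \<Rightarrow> 'a \<Rightarrow> ('a \<Rightarrow>\<^sub>L real) \<Rightarrow> bool" where
  "proximal_subgradient \<phi> xb xs \<longleftrightarrow>
     (\<exists>r>0. \<exists>\<epsilon>>0. \<forall>x \<in> ball xb \<epsilon>.
        \<phi> x \<ge> \<phi> xb + ereal (blinfun_apply xs (x - xb) - r / 2 * (norm (x - xb))\<^sup>2))"

definition prox_map ::
  "('a::real_normed_vector \<Rightarrow> ereal) \<Rightarrow> ('a \<Rightarrow>\<^sub>L real) \<Rightarrow> real \<Rightarrow> 'a \<Rightarrow> 'a set" where
  "prox_map \<phi> xs lam x =
     (let f = (\<lambda>w. \<phi> w + ereal (- blinfun_apply xs w + (norm (w - x))\<^sup>2 / (2 * lam)))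
      in {w. \<forall>v. f w \<le> f v})"

end

theory Submission
  imports Defs
begin

(* Since phi(xb) = c is finite, the prox set P_l(xb) is {xb} exactly when the concave quadratic
   q_t(x) = c + xs(x - xb) - t |x - xb|^2 with t = 1/(2l) lies strictly below phi away from xb.
   Enlarging t preserves this, so (ii) and (iii) agree. A global minorant q_t is a local one and,
   after absorbing the linear term, a quadratic lower bound: (ii) gives (i). Conversely, the
   proximal subgradient inequality provides q_t below phi on a ball around xb, and outside the
   ball the prox-bound, recentred at xb, dominates q_t once t is large, because the quadratic
   term beats the linear one at distance at least the radius. *)

lemma argmin_eq_singleton_iff:
  fixes F :: "'a \<Rightarrow> 'b::linorder"
  shows "{w. \<forall>v. F w \<le> F v} = {a} \<longleftrightarrow> (\<forall>v. v \<noteq> a \<longrightarrow> F a < F v)"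
proof
  assume argmin: "{w. \<forall>v. F w \<le> F v} = {a}"
  show "\<forall>v. v \<noteq> a \<longrightarrow> F a < F v"
  proof (intro allI impI)
    fix v assume "v \<noteq> a"
    then have "v \<notin> {w. \<forall>v. F w \<le> F v}" using argmin by blast
    then obtain u where "F u < F v" by (auto simp: not_le)
    moreover have "a \<in> {w. \<forall>v. F w \<le> F v}" using argmin by blast
    ultimately show "F a < F v" by (auto intro: le_less_trans)
  qed
next
  assume strict: "\<forall>v. v \<noteq> a \<longrightarrow> F a < F v"
  then have "F a \<le> F v" for v by (cases "v = a") auto
  moreover have "w = a" if "\<forall>v. F w \<le> F v" for w
    using that strict by (meson not_le)
  ultimately show "{w. \<forall>v. F w \<le> F v} = {a}" by auto
qed

lemma prox_map_eq_singleton_iff: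
  assumes "\<phi> xb = ereal c"
  shows "prox_map \<phi> xs l xb = {xb} \<longleftrightarrow>
    (\<forall>v. v \<noteq> xb \<longrightarrow> ereal (c + xs (v - xb) - (norm (v - xb))\<^sup>2 / (2 * l)) < \<phi> v)"
proof -
  define F where "F w = \<phi> w + ereal (- xs w + (norm (w - xb))\<^sup>2 / (2 * l))" for w
  have "F xb < F v \<longleftrightarrow> ereal (c + xs (v - xb) - (norm (v - xb))\<^sup>2 / (2 * l)) < \<phi> v" for v
    by (cases "\<phi> v") (auto simp: F_def assms blinfun.diff_right)
  then show ?thesis
    unfolding prox_map_def Let_def F_def[symmetric] argmin_eq_singleton_iff by blast
qed

lemma prox_map_eq_singleton_antimono:
  assumes "\<phi> xb = ereal c" and "prox_map \<phi> xs l xb = {xb}" and "0 < l'" and "l' \<le> l"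
  shows "prox_map \<phi> xs l' xb = {xb}"
proof -
  have "(norm (v - xb))\<^sup>2 / (2 * l) \<le> (norm (v - xb))\<^sup>2 / (2 * l')" for v
    using assms(3,4) by (intro divide_left_mono) auto
  then show ?thesis
    using assms(2) unfolding prox_map_eq_singleton_iff[of \<phi> xb c, OF assms(1)]
    by (meson diff_left_mono ereal_less_eq(3) order.strict_trans1)
qed

lemma quadratic_minorant_if_prox_map_eq_singleton:
  assumes "\<phi> xb = ereal c" and "prox_map \<phi> xs l xb = {xb}"
  shows "ereal (c + xs (x - xb) - (norm (x - xb))\<^sup>2 / (2 * l)) \<le> \<phi> x"
  using assms unfolding prox_map_eq_singleton_iff[of \<phi> xb c, OF assms(1)]
  by (cases "x = xb") (auto intro: less_imp_le)

lemma prox_bounded_iff_centered: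
  fixes \<phi> :: "'a::real_normed_vector \<Rightarrow> ereal"
  shows "prox_bounded \<phi> \<longleftrightarrow> (\<exists>\<alpha> \<beta> :: real. \<forall>x. ereal (\<alpha> * (norm (x - z))\<^sup>2 + \<beta>) \<le> \<phi> x)"
proof
  assume "prox_bounded \<phi>"
  then obtain \<alpha> \<beta> :: real and x0 where bound: "ereal (\<alpha> * (norm (x - x0))\<^sup>2 + \<beta>) \<le> \<phi> x" for x
    unfolding prox_bounded_def by blast
  define A where "A = max 0 (- \<alpha>)"
  define d where "d = norm (z - x0)"
  have "- 2 * A * (norm (x - z))\<^sup>2 + (\<beta> - 2 * A * d\<^sup>2) \<le> \<alpha> * (norm (x - x0))\<^sup>2 + \<beta>" for x
  proof -
    have "norm (x - x0) \<le> norm (x - z) + d"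
      unfolding d_def using norm_triangle_ineq[of "x - z" "z - x0"] by simp
    then have "(norm (x - x0))\<^sup>2 \<le> (norm (x - z) + d)\<^sup>2"
      by (intro power_mono) auto
    also have "\<dots> \<le> 2 * (norm (x - z))\<^sup>2 + 2 * d\<^sup>2"
      using sum_squares_bound[of "norm (x - z)" d] by (simp add: power2_sum)
    finally have "A * (norm (x - x0))\<^sup>2 \<le> A * (2 * (norm (x - z))\<^sup>2 + 2 * d\<^sup>2)"
      by (intro mult_left_mono) (auto simp: A_def)
    moreover have "- A * (norm (x - x0))\<^sup>2 \<le> \<alpha> * (norm (x - x0))\<^sup>2"
      unfolding A_def by (intro mult_right_mono) auto
    ultimately show ?thesis by (simp add: algebra_simps)
  qed
  then show "\<exists>\<alpha> \<beta> :: real. \<forall>x. ereal (\<alpha> * (norm (x - z))\<^sup>2 + \<beta>) \<le> \<phi> x"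
    using bound by (meson ereal_less_eq(3) order_trans)
qed (auto simp: prox_bounded_def)

lemma prox_bounded_if_quadratic_minorant:
  fixes xs :: "'a::real_normed_vector \<Rightarrow>\<^sub>L real"
  assumes "\<And>x. ereal (c + xs (x - z) - t * (norm (x - z))\<^sup>2) \<le> \<phi> x"
  shows "prox_bounded \<phi>"
  unfolding prox_bounded_iff_centered[of _ z]
proof (intro exI allI)
  fix x
  let ?n = "norm (x - z)" and ?K = "norm xs"
  have "- (?K * ?n) \<le> xs (x - z)"
    using norm_blinfun[of xs "x - z"] by simp
  moreover have "2 * ?K * ?n \<le> ?K\<^sup>2 + ?n\<^sup>2"
    by (rule sum_squares_bound)
  ultimately have "- (t + 1/2) * ?n\<^sup>2 + (c - ?K\<^sup>2 / 2) \<le> c + xs (x - z) - t * ?n\<^sup>2"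
    by (simp add: algebra_simps)
  then show "ereal (- (t + 1/2) * ?n\<^sup>2 + (c - ?K\<^sup>2 / 2)) \<le> \<phi> x"
    using assms[of x] by (meson ereal_less_eq(3) order_trans)
qed

lemma proximal_subgradient_if_quadratic_minorant:
  fixes xs :: "'a::real_normed_vector \<Rightarrow>\<^sub>L real"
  assumes "\<And>x. ereal (c + xs (x - xb) - r / 2 * (norm (x - xb))\<^sup>2) \<le> \<phi> x"
    and "\<phi> xb = ereal c" and "r > 0"
  shows "proximal_subgradient \<phi> xb xs"
  unfolding proximal_subgradient_def assms(2) plus_ereal.simps(1) add_diff_eq
  using assms(1,3) by (intro exI[of _ r] exI[of _ 1]) auto

lemma quadratic_dominates_linear:
  fixes K C s n \<epsilon> :: real
  assumes "0 \<le> K" and "0 < \<epsilon>" and "\<epsilon> \<le> n" and "(K + (\<bar>C\<bar> + 1) / \<epsilon>) / \<epsilon> \<le> s"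
  shows "K * n + C < s * n\<^sup>2"
proof -
  have "K * n + C < K * n + ((\<bar>C\<bar> + 1) / \<epsilon>) * \<epsilon>"
    using assms(2) by simp
  also have "\<dots> \<le> K * n + ((\<bar>C\<bar> + 1) / \<epsilon>) * n"
    using assms(2,3) by (intro add_left_mono mult_left_mono) auto
  also have "\<dots> = ((K + (\<bar>C\<bar> + 1) / \<epsilon>) / \<epsilon>) * \<epsilon> * n"
    using assms(2) by (simp add: field_simps)
  also have "\<dots> \<le> s * n * n"
  proof -
    have "0 \<le> (K + (\<bar>C\<bar> + 1) / \<epsilon>) / \<epsilon>"
      using assms(1,2) by simp
    then have "0 \<le> s"
      using assms(4) by linarith
    then show ?thesis
      using assms by (intro mult_right_mono mult_mono) auto
  qed
  finally show ?thesis by (simp add: power2_eq_square)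
qed

lemma prox_map_eq_singleton_if_proximal_subgradient:
  assumes "\<phi> xb = ereal c" and "prox_bounded \<phi>" and "proximal_subgradient \<phi> xb xs"
  shows "\<exists>l>0. prox_map \<phi> xs l xb = {xb}"
proof -
  obtain r \<epsilon> where r: "r > 0" and \<epsilon>: "\<epsilon> > 0" and near: "\<And>x. x \<in> ball xb \<epsilon> \<Longrightarrow>
      ereal (c + xs (x - xb) - r / 2 * (norm (x - xb))\<^sup>2) \<le> \<phi> x"
    using assms(3) unfolding proximal_subgradient_def assms(1) plus_ereal.simps(1) add_diff_eq by blast
  obtain \<alpha> \<beta> :: real where far: "\<And>x. ereal (\<alpha> * (norm (x - xb))\<^sup>2 + \<beta>) \<le> \<phi> x"
    using assms(2) unfolding prox_bounded_iff_centered[of _ xb] by blast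
  define s where "s = (norm xs + (\<bar>c - \<beta>\<bar> + 1) / \<epsilon>) / \<epsilon>"
  define t where "t = \<bar>\<alpha>\<bar> + s + r"
  have "s \<ge> 0" unfolding s_def using \<epsilon> by simp
  then have "t > 0" "t > r / 2" "t + \<alpha> \<ge> s" unfolding t_def using r by auto
  have "ereal (c + xs (x - xb) - t * (norm (x - xb))\<^sup>2) < \<phi> x" if "x \<noteq> xb" for x
  proof (cases "x \<in> ball xb \<epsilon>")
    case True
    have "t * (norm (x - xb))\<^sup>2 > r / 2 * (norm (x - xb))\<^sup>2"
      using \<open>t > r / 2\<close> that by simp
    then have "ereal (c + xs (x - xb) - t * (norm (x - xb))\<^sup>2)
        < ereal (c + xs (x - xb) - r / 2 * (norm (x - xb))\<^sup>2)"
      by simp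
    also have "\<dots> \<le> \<phi> x" using near[OF True] .
    finally show ?thesis .
  next
    case False
    then have "\<epsilon> \<le> norm (x - xb)" by (simp add: dist_norm norm_minus_commute)
    then have "norm xs * norm (x - xb) + (c - \<beta>) < (t + \<alpha>) * (norm (x - xb))\<^sup>2"
      using quadratic_dominates_linear[OF norm_ge_zero \<epsilon>] \<open>t + \<alpha> \<ge> s\<close> unfolding s_def by auto
    moreover have "xs (x - xb) \<le> norm xs * norm (x - xb)"
      using norm_blinfun[of xs "x - xb"] by simp
    ultimately have "c + xs (x - xb) - t * (norm (x - xb))\<^sup>2 < \<alpha> * (norm (x - xb))\<^sup>2 + \<beta>"
      by (simp add: algebra_simps)
    then have "ereal (c + xs (x - xb) - t * (norm (x - xb))\<^sup>2)
        < ereal (\<alpha> * (norm (x - xb))\<^sup>2 + \<beta>)"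
      by simp
    also have "\<dots> \<le> \<phi> x" using far[of x] .
    finally show ?thesis .
  qed
  then have "prox_map \<phi> xs (1 / (2 * t)) xb = {xb}"
    unfolding prox_map_eq_singleton_iff[of \<phi> xb c, OF assms(1)] by (simp add: mult.commute)
  then show ?thesis using \<open>t > 0\<close> by (intro exI[of _ "1 / (2 * t)"]) auto
qed

theorem lemma4p2:
  fixes \<phi> :: "'a::banach \<Rightarrow> ereal" and xb :: 'a and xs :: "'a \<Rightarrow>\<^sub>L real"
  assumes "proper_fun \<phi>" and "lsc_fun \<phi>" and "\<phi> xb \<noteq> \<infinity>"
  shows "((prox_bounded \<phi> \<and> proximal_subgradient \<phi> xb xs)
            \<longleftrightarrow> (\<exists>l>0. prox_map \<phi> xs l xb = {xb}))
       \<and> ((\<exists>l>0. prox_map \<phi> xs l xb = {xb})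
            \<longleftrightarrow> (\<exists>l0>0. \<forall>l. 0 < l \<and> l < l0 \<longrightarrow> prox_map \<phi> xs l xb = {xb}))"
proof -
  obtain c where c: "\<phi> xb = ereal c"
    using assms(1,3) unfolding proper_fun_def by (cases "\<phi> xb") auto
  have ii_i: "prox_bounded \<phi> \<and> proximal_subgradient \<phi> xb xs"
    if "l > 0" and "prox_map \<phi> xs l xb = {xb}" for l
  proof -
    have minorant: "ereal (c + xs (x - xb) - 1 / l / 2 * (norm (x - xb))\<^sup>2) \<le> \<phi> x" for x
      using quadratic_minorant_if_prox_map_eq_singleton[OF c that(2), of x] by (simp add: field_simps)
    then show ?thesis
      using prox_bounded_if_quadratic_minorant[OF minorant]
        proximal_subgradient_if_quadratic_minorant[OF minorant c] \<open>l > 0\<close> by simp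
  qed
  have ii_iii: "\<forall>l'. 0 < l' \<and> l' < l \<longrightarrow> prox_map \<phi> xs l' xb = {xb}"
    if "prox_map \<phi> xs l xb = {xb}" for l
    using prox_map_eq_singleton_antimono[OF c that] by auto
  have iii_ii: "prox_map \<phi> xs (l0 / 2) xb = {xb}"
    if "l0 > 0" and "\<forall>l. 0 < l \<and> l < l0 \<longrightarrow> prox_map \<phi> xs l xb = {xb}" for l0
    using that by auto
  show ?thesis
    using prox_map_eq_singleton_if_proximal_subgradient[of \<phi> xb c xs, OF c] ii_i ii_iii iii_ii
    by (metis half_gt_zero)
qed

end
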